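(* Let $X, Y$ be two infinite sets forming a partition of $\mathbb{N} = \{0,1,2,\ldots\}$, let $(x(n))_{n\geq 0}$ be the increasing enumeration of $X$ and $(y(n))_{n\geq0}$ the increasing enumeration of $Y$. Suppose that for all $n \geq 0$: $x(x(n)) = 2x(n)$, $y(y(n)) = 2y(n)$, and $|x(n) - y(n)| = 1$. Then either $x = a$ and $y = b$, or $x = b$ and $y = a$. In particular $(x(n)-y(n))_{n\geq 0}$ equals $(1-2t(n))_{n\geq0}$ or $(2t(n)-1)_{n\geq 0}$.
   Context: The Thue–Morse sequence $(t(n))_{n\geq 0}$ is defined by $t(0)=0$, $t(2n)=t(n)$, $t(2n+1)=1-t(n)$. A nonnegative integer is odious if the sum of its binary digits is odd and evil if it is even. $(a(n))_{n\geq0}$ is the increasing sequence of odious numbers and $(b(n))_{n\geq 0}$ the increasing sequence of evil numbers, both indexed from $0$. *)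

theory Defs
  imports "HOL-Library.Infinite_Set"
begin

fun thue_morse :: "nat \<Rightarrow> nat" where
  "thue_morse n = (if n = 0 then 0
     else if even n then thue_morse (n div 2) else 1 - thue_morse (n div 2))"

fun binsum :: "nat \<Rightarrow> nat" where
  "binsum n = (if n = 0 then 0 else n mod 2 + binsum (n div 2))"

definition odious :: "nat \<Rightarrow> bool" where
  "odious n \<longleftrightarrow> odd (binsum n)"

definition evil :: "nat \<Rightarrow> bool" where
  "evil n \<longleftrightarrow> even (binsum n)"

definition odious_seq :: "nat \<Rightarrow> nat" where
  "odious_seq = enumerate {n. odious n}"

definition evil_seq :: "nat \<Rightarrow> nat" where
  "evil_seq = enumerate {n. evil n}"

end

theory Submission
  imports Defs
begin

(* Write x = enumerate X and y = enumerate Y.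
   (1) If X, Y partition the naturals and |x(n) - y(n)| = 1 for all n, then for every n
       the pair {x(n), y(n)} is exactly {2n, 2n+1}: by strong induction, both x(n) and y(n)
       are at least 2n, and whichever of X, Y contains 2n must enumerate it at index n.
   (2) The condition x(x(n)) = 2x(n) says precisely x(m) = 2m for every m in X.  With (1),
       m in X forces x(m) = 2m, y(m) = 2m+1, so 2m is in X and 2m+1 in Y; symmetrically for Y.
       Hence X is closed under m -> 2m and m -> 2m+1 swaps membership, exactly the recursion
       of the Thue-Morse sequence.
   (3) A set with these two closure properties is determined by whether it contains 0: it is
       {t = 0} or {t = 1}, i.e. the evil or the odious numbers (t(n) is the binary digit sum
       mod 2).  Finally x(n) - y(n) is -1 on X and +1 on Y, which is 2t(n)-1 or 1-2t(n). *)

declare thue_morse.simps[simp del] binsum.simps[simp del]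

lemma thue_morse_0 [simp]: "thue_morse 0 = 0"
  by (simp add: thue_morse.simps)

lemma thue_morse_double [simp]: "thue_morse (2 * n) = thue_morse n"
  by (cases "n = 0") (simp_all add: thue_morse.simps[of "2 * n"])

lemma thue_morse_double_Suc [simp]: "thue_morse (Suc (2 * n)) = 1 - thue_morse n"
  by (subst thue_morse.simps) simp

lemma binsum_0 [simp]: "binsum 0 = 0"
  by (simp add: binsum.simps)

lemma binsum_double [simp]: "binsum (2 * n) = binsum n"
  by (cases "n = 0") (simp_all add: binsum.simps[of "2 * n"])

lemma binsum_double_Suc [simp]: "binsum (Suc (2 * n)) = Suc (binsum n)"
  by (subst binsum.simps) simp

lemma nat_half_cases:
  fixes n :: nat
  obtains "n = 0" | k where "n = 2 * k" "k < n" | k where "n = Suc (2 * k)" "k < n"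
proof -
  have "n = 0 \<or> (n = 2 * (n div 2) \<and> n div 2 < n) \<or> (n = Suc (2 * (n div 2)) \<and> n div 2 < n)"
    by presburger
  with that show thesis by blast
qed

lemma thue_morse_le_1: "thue_morse n \<le> 1"
proof (induction n rule: less_induct)
  case (less n)
  show ?case
    by (cases n rule: nat_half_cases) (use less in auto)
qed

lemma thue_morse_0_or_1: "thue_morse n = 0 \<or> thue_morse n = 1"
  using thue_morse_le_1[of n] by linarith

lemma thue_morse_binsum: "thue_morse n = binsum n mod 2"
proof (induction n rule: less_induct)
  case (less n)
  show ?case
    by (cases n rule: nat_half_cases) (use less in \<open>auto simp: mod_Suc\<close>)
qed

lemma evil_iff_thue_morse: "evil n \<longleftrightarrow> thue_morse n = 0"
  unfolding evil_def thue_morse_binsum by presburger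

lemma odious_iff_not_evil: "odious n \<longleftrightarrow> \<not> evil n"
  unfolding odious_def evil_def by simp

lemma odious_iff_thue_morse: "odious n \<longleftrightarrow> thue_morse n = 1"
  unfolding odious_def thue_morse_binsum by presburger

lemma thue_morse_closure_unique:
  fixes S :: "nat set"
  assumes double: "\<And>m. 2 * m \<in> S \<longleftrightarrow> m \<in> S"
    and double_Suc: "\<And>m. 2 * m + 1 \<in> S \<longleftrightarrow> m \<notin> S"
  shows "S = {n. thue_morse n = (if 0 \<in> S then 0 else 1)}"
proof -
  have level: "n \<in> S \<longleftrightarrow> (thue_morse n = 0 \<longleftrightarrow> 0 \<in> S)" for n
  proof (induction n rule: less_induct)
    case (less n)
    show ?case
    proof (cases n rule: nat_half_cases)
      case 1
      then show ?thesis by simp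
    next
      case (2 k)
      then show ?thesis
        using less[of k] double[of k] by auto
    next
      case (3 k)
      then show ?thesis
        using less[of k] double_Suc[of k] thue_morse_le_1[of k] by auto
    qed
  qed
  show ?thesis
  proof (intro set_eqI)
    fix n
    show "n \<in> S \<longleftrightarrow> n \<in> {n. thue_morse n = (if 0 \<in> S then 0 else 1)}"
      using level[of n] thue_morse_0_or_1[of n] by auto
  qed
qed

lemma enumerate_at_member:
  fixes X :: "nat set"
  assumes "infinite X"
    and "\<And>n. enumerate X (enumerate X n) = 2 * enumerate X n"
    and "m \<in> X"
  shows "enumerate X m = 2 * m"
  using enumerate_Ex[OF assms(1,3)] assms(2) by blast

locale adjacent_partition =
  fixes X Y :: "nat set"
  assumes infinite_X: "infinite X" and infinite_Y: "infinite Y"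
    and disjoint: "X \<inter> Y = {}" and cover: "X \<union> Y = UNIV"
    and adjacent: "\<And>n. \<bar>int (enumerate X n) - int (enumerate Y n)\<bar> = 1"
begin

lemma swap: "adjacent_partition Y X"
  using infinite_X infinite_Y disjoint cover adjacent
  by unfold_locales (auto simp: abs_minus_commute)

lemma pair_at_index:
  "(enumerate X n = 2 * n \<and> enumerate Y n = 2 * n + 1) \<or>
   (enumerate X n = 2 * n + 1 \<and> enumerate Y n = 2 * n)"
proof (induction n rule: less_induct)
  case (less n)
  define x where "x = enumerate X"
  define y where "y = enumerate Y"
  have x_in_X: "\<And>k. x k \<in> X" unfolding x_def by (rule enumerate_in_set[OF infinite_X])
  have y_in_Y: "\<And>k. y k \<in> Y" unfolding y_def by (rule enumerate_in_set[OF infinite_Y])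
  have x_ne_y: "\<And>k l. x k \<noteq> y l" using x_in_X y_in_Y disjoint by (metis disjoint_iff)
  have IH: "\<And>k. k < n \<Longrightarrow> (x k = 2 * k \<and> y k = 2 * k + 1) \<or> (x k = 2 * k + 1 \<and> y k = 2 * k)"
    using less x_def y_def by blast
  text \<open>Both enumerations have passed {0, ..., 2n-1} by index n, since the values at
    index n-1 are 2n-2 and 2n-1.\<close>
  have x_lower: "2 * n \<le> x n"
  proof (cases n)
    case (Suc k)
    have x_mono: "x k < x n" using Suc infinite_X x_def by simp
    have "(x k = 2 * k \<and> y k = 2 * k + 1) \<or> (x k = 2 * k + 1 \<and> y k = 2 * k)" using IH[of k] Suc by simp
    moreover have "x n \<noteq> y k" by (rule x_ne_y)
    ultimately show ?thesis using x_mono Suc by (elim disjE conjE) arith+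
  qed simp
  have y_lower: "2 * n \<le> y n"
  proof (cases n)
    case (Suc k)
    have y_mono: "y k < y n" using Suc infinite_Y y_def by simp
    have "(x k = 2 * k \<and> y k = 2 * k + 1) \<or> (x k = 2 * k + 1 \<and> y k = 2 * k)" using IH[of k] Suc by simp
    moreover have "x k \<noteq> y n" by (rule x_ne_y)
    ultimately show ?thesis using y_mono Suc by (elim disjE conjE) arith+
  qed simp
  have adjacent_n: "\<bar>int (x n) - int (y n)\<bar> = 1" using adjacent x_def y_def by simp
  text \<open>Whichever set contains 2n cannot enumerate it before index n, and by the lower
    bound not after it either.\<close>
  have "2 * n \<in> X \<or> 2 * n \<in> Y" using cover by blast
  then show ?case
  proof
    assume "2 * n \<in> X"
    then obtain m where m: "x m = 2 * n" using enumerate_Ex[OF infinite_X] x_def by blast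
    have "\<not> m < n" using IH[of m] m by auto
    then have "x n \<le> x m" using infinite_X x_def by simp
    then have "x n = 2 * n" using x_lower m by simp
    then show ?thesis using adjacent_n y_lower x_def y_def by auto
  next
    assume "2 * n \<in> Y"
    then obtain m where m: "y m = 2 * n" using enumerate_Ex[OF infinite_Y] y_def by blast
    have "\<not> m < n" using IH[of m] m by auto
    then have "y n \<le> y m" using infinite_Y y_def by simp
    then have "y n = 2 * n" using y_lower m by simp
    then show ?thesis using adjacent_n x_lower x_def y_def by auto
  qed
qed

lemma values_at_member:
  assumes doubling: "\<And>n. enumerate X (enumerate X n) = 2 * enumerate X n"
    and "m \<in> X"
  shows "enumerate X m = 2 * m" and "enumerate Y m = 2 * m + 1"
proof -
  show x_m: "enumerate X m = 2 * m"
    using enumerate_at_member[OF infinite_X doubling \<open>m \<in> X\<close>] .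
  then show "enumerate Y m = 2 * m + 1"
    using pair_at_index[of m] by auto
qed

lemma children_of_member:
  assumes "\<And>n. enumerate X (enumerate X n) = 2 * enumerate X n"
    and "m \<in> X"
  shows "2 * m \<in> X" and "2 * m + 1 \<in> Y"
  using values_at_member[OF assms] enumerate_in_set[OF infinite_X, of m]
    enumerate_in_set[OF infinite_Y, of m] by simp_all

lemma thue_morse_recursion:
  assumes doubling_X: "\<And>n. enumerate X (enumerate X n) = 2 * enumerate X n"
    and doubling_Y: "\<And>n. enumerate Y (enumerate Y n) = 2 * enumerate Y n"
  shows "2 * m \<in> X \<longleftrightarrow> m \<in> X" and "2 * m + 1 \<in> X \<longleftrightarrow> m \<notin> X"
proof -
  have in_Y: "k \<in> Y \<longleftrightarrow> k \<notin> X" for k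
    using disjoint cover by blast
  note X_children = children_of_member[OF doubling_X]
  note Y_children = adjacent_partition.children_of_member[OF swap doubling_Y]
  show "2 * m \<in> X \<longleftrightarrow> m \<in> X" "2 * m + 1 \<in> X \<longleftrightarrow> m \<notin> X"
    using X_children[of m] Y_children[of m] in_Y by blast+
qed

lemma difference_sign:
  assumes doubling_X: "\<And>n. enumerate X (enumerate X n) = 2 * enumerate X n"
    and doubling_Y: "\<And>n. enumerate Y (enumerate Y n) = 2 * enumerate Y n"
  shows "int (enumerate X n) - int (enumerate Y n) = (if n \<in> X then -1 else 1)"
proof (cases "n \<in> X")
  case True
  then show ?thesis using values_at_member[OF doubling_X] by simp
next
  case False
  then have "n \<in> Y" using cover by blast
  then show ?thesis
    using False adjacent_partition.values_at_member[OF swap doubling_Y] by simp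
qed

end

theorem theorem4:
  fixes X Y :: "nat set"
  assumes "infinite X" and "infinite Y"
    and "X \<inter> Y = {}" and "X \<union> Y = UNIV"
    and "\<And>n. enumerate X (enumerate X n) = 2 * enumerate X n"
    and "\<And>n. enumerate Y (enumerate Y n) = 2 * enumerate Y n"
    and "\<And>n. \<bar>int (enumerate X n) - int (enumerate Y n)\<bar> = 1"
  shows "((enumerate X = odious_seq \<and> enumerate Y = evil_seq) \<or>
          (enumerate X = evil_seq \<and> enumerate Y = odious_seq))
         \<and> ((\<lambda>n. int (enumerate X n) - int (enumerate Y n)) = (\<lambda>n. 1 - 2 * int (thue_morse n)) \<or>
            (\<lambda>n. int (enumerate X n) - int (enumerate Y n)) = (\<lambda>n. 2 * int (thue_morse n) - 1))"
proof -
  interpret adjacent_partition X Y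
    using assms(1-4,7) by unfold_locales
  have X_level: "X = {n. thue_morse n = (if 0 \<in> X then 0 else 1)}"
    using thue_morse_closure_unique thue_morse_recursion[OF assms(5,6)] by blast
  have Y_compl: "Y = - X"
    using assms(3,4) by blast
  have diff: "(\<lambda>n. int (enumerate X n) - int (enumerate Y n)) = (\<lambda>n. if n \<in> X then -1 else 1)"
    using difference_sign[OF assms(5,6)] by blast
  show ?thesis
  proof (cases "0 \<in> X")
    case True
    then have X_evil: "X = {n. evil n}"
      using X_level by (simp add: evil_iff_thue_morse)
    then have Y_odious: "Y = {n. odious n}"
      using Y_compl by (auto simp: odious_iff_not_evil)
    have "(\<lambda>n. int (enumerate X n) - int (enumerate Y n)) = (\<lambda>n. 2 * int (thue_morse n) - 1)"
      unfolding diff using thue_morse_0_or_1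
      by (force simp: fun_eq_iff X_evil evil_iff_thue_morse)
    then show ?thesis
      unfolding evil_seq_def odious_seq_def by (simp add: X_evil Y_odious)
  next
    case False
    then have X_odious: "X = {n. odious n}"
      using X_level by (simp add: odious_iff_thue_morse)
    then have Y_evil: "Y = {n. evil n}"
      using Y_compl by (auto simp: odious_iff_not_evil)
    have "(\<lambda>n. int (enumerate X n) - int (enumerate Y n)) = (\<lambda>n. 1 - 2 * int (thue_morse n))"
      unfolding diff using thue_morse_0_or_1
      by (force simp: fun_eq_iff X_odious odious_iff_thue_morse)
    then show ?thesis
      unfolding evil_seq_def odious_seq_def by (simp add: X_odious Y_evil)
  qed
qed

end
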